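(* Let $f:H\to\mathbb{R}\cup\{+\infty\}$ be proper lower semicontinuous with the K\L{} property at $x^*$ with desingularizing function $\varphi:[0,\eta[\to[0,\infty[$, the K\L{} inequality holding on $\Gamma_\eta(x^*,\delta)$. Let $(x^k)$ satisfy $\mathbf{H}_1$ and $\mathbf{H}_2$, and fix $k\ge1$. If $x^k$ and $x^{k+1}$ belong to $\underline{\Gamma}_\eta(x^*,\delta)$, then $$2\|x^{k+1}-x^k\|\le\|x^k-x^{k-1}\|+\frac{1}{a_kb_k}\big[\varphi(f(x^k)-f(x^* ))-\varphi(f(x^{k+1})-f(x^* ))\big]+\varepsilon_k.$$
   Context: Lazy slope $\|\partial f(x)\|_-=\inf_{p\in\partial f(x)}\|p\|$ ($+\infty$ if empty), $\partial f$ the limiting Fréchet subdifferential. Desingularizing function: continuous concave $\varphi:[0,\eta[\to[0,\infty[$, $\varphi(0)=0$, $C^1$ on $]0,\eta[$ with $\varphi'>0$. K\L{} inequality on $\Gamma_\eta(x^*,\delta)=\{x:\|x-x^*\|<\delta,\ f(x^* )<f(x)<f(x^* )+\eta\}$: $\varphi'(f(x)-f(x^* ))\|\partial f(x)\|_-\ge1$. $\underline{\Gamma}_\eta(x^*,\delta)=\{x:\|x-x^*\|<\delta,\ f(x^* )\le f(x)<f(x^* )+\eta\}$. $\mathbf{H}_1$: for each $k$, $f(x^{k+1})+a_k\|x^{k+1}-x^k\|^2\le f(x^k)$, $a_k>0$. $\mathbf{H}_2$: for each $k$, $b_{k+1}\|\partial f(x^{k+1})\|_-\le\|x^{k+1}-x^k\|+\varepsilon_{k+1}$,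 $b_{k+1}>0$, $\varepsilon_{k+1}\ge0$. *)

theory Defs
  imports "HOL-Analysis.Analysis"
begin

text \<open>Functions H -> R \<union> {+\<infinity>} are modelled as functions into ereal never taking -\<infinity>.\<close>

definition proper_fun :: "('a \<Rightarrow> ereal) \<Rightarrow> bool" where
  "proper_fun f \<longleftrightarrow> (\<exists>x. f x \<noteq> \<infinity>) \<and> (\<forall>x. f x \<noteq> -\<infinity>)"

definition lsc_fun :: "('a::topological_space \<Rightarrow> ereal) \<Rightarrow> bool" where
  "lsc_fun f \<longleftrightarrow> (\<forall>x. f x \<le> Liminf (at x) f)"

text \<open>Frechet subdifferential: f x finite and
  liminf_{y\<rightarrow>x, y\<noteq>x} (f y - f x - <p, y-x>)/||y-x|| \<ge> 0, written in epsilon-delta form.\<close>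
definition frechet_subdiff :: "('a::real_inner \<Rightarrow> ereal) \<Rightarrow> 'a \<Rightarrow> 'a set" where
  "frechet_subdiff f x = {p. \<bar>f x\<bar> \<noteq> \<infinity> \<and>
     (\<forall>e>0. \<exists>d>0. \<forall>y. norm (y - x) < d \<longrightarrow>
        f x + ereal (p \<bullet> (y - x) - e * norm (y - x)) \<le> f y)}"

definition limiting_subdiff :: "('a::real_inner \<Rightarrow> ereal) \<Rightarrow> 'a \<Rightarrow> 'a set" where
  "limiting_subdiff f x = {p. \<exists>xs ps. xs \<longlonglongrightarrow> x \<and> (\<lambda>n. f (xs n)) \<longlonglongrightarrow> f x \<and>
       (\<forall>n. ps n \<in> frechet_subdiff f (xs n)) \<and> ps \<longlonglongrightarrow> p}"

text \<open>Lazy slope: inf of norms of subgradients, +\<infinity> if the subdifferential is empty.\<close>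
definition lazy_slope :: "('a::real_inner \<Rightarrow> ereal) \<Rightarrow> 'a \<Rightarrow> ereal" where
  "lazy_slope f x = Inf ((\<lambda>p. ereal (norm p)) ` limiting_subdiff f x)"

definition desingularizing :: "(real \<Rightarrow> real) \<Rightarrow> real \<Rightarrow> bool" where
  "desingularizing \<phi> \<eta> \<longleftrightarrow> 0 < \<eta> \<and>
     continuous_on {0..<\<eta>} \<phi> \<and> concave_on {0..<\<eta>} \<phi> \<and> \<phi> 0 = 0 \<and>
     (\<forall>s\<in>{0..<\<eta>}. 0 \<le> \<phi> s) \<and>
     (\<forall>s\<in>{0<..<\<eta>}. \<phi> differentiable at s) \<and>
     continuous_on {0<..<\<eta>} (deriv \<phi>) \<and>
     (\<forall>s\<in>{0<..<\<eta>}. 0 < deriv \<phi> s)"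

definition Gamma_set :: "('a::real_normed_vector \<Rightarrow> ereal) \<Rightarrow> 'a \<Rightarrow> real \<Rightarrow> real \<Rightarrow> 'a set" where
  "Gamma_set f xs \<eta> \<delta> = {x. norm (x - xs) < \<delta> \<and> f xs < f x \<and> f x < f xs + ereal \<eta>}"

definition Gamma_low_set :: "('a::real_normed_vector \<Rightarrow> ereal) \<Rightarrow> 'a \<Rightarrow> real \<Rightarrow> real \<Rightarrow> 'a set" where
  "Gamma_low_set f xs \<eta> \<delta> = {x. norm (x - xs) < \<delta> \<and> f xs \<le> f x \<and> f x < f xs + ereal \<eta>}"

definition KL_at :: "('a::real_inner \<Rightarrow> ereal) \<Rightarrow> 'a \<Rightarrow> (real \<Rightarrow> real) \<Rightarrow> real \<Rightarrow> real \<Rightarrow> bool" where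
  "KL_at f xs \<phi> \<eta> \<delta> \<longleftrightarrow> limiting_subdiff f xs \<noteq> {} \<and> 0 < \<delta> \<and> desingularizing \<phi> \<eta> \<and>
     (\<forall>x\<in>Gamma_set f xs \<eta> \<delta>.
        1 \<le> ereal (deriv \<phi> (real_of_ereal (f x - f xs))) * lazy_slope f x)"

end

theory Submission
  imports Defs
begin

(* Write r_j = f(x^j) - f(x^star) and d = |x^{k+1} - x^k|.  By H1,
   r_{k+1} + a_k d^2 <= r_k.  If r_k > 0, the KL inequality at x^k combined
   with H2 gives b_k <= phi'(r_k) D with D = |x^k - x^{k-1}| + eps_k, and
   concavity of phi gives phi'(r_k)(r_k - r_{k+1}) <= phi(r_k) - phi(r_{k+1}).
   Multiplying, a_k b_k d^2 <= D (phi(r_k) - phi(r_{k+1})), and the AM-GM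
   inequality 2 sqrt(uv) <= u + v yields the claim. *)

text \<open>A concave function lies below its tangents; for a desingularizing
  function this bounds the decrease of \<open>\<phi>\<close> from below by the derivative.\<close>
lemma desingularizing_decrease:
  assumes "desingularizing \<phi> \<eta>" "0 \<le> s" "s \<le> r" "0 < r" "r < \<eta>"
  shows "deriv \<phi> r * (r - s) \<le> \<phi> r - \<phi> s"
proof -
  have concave: "convex_on {0..<\<eta>} (\<lambda>t. - \<phi> t)"
    using assms(1) unfolding desingularizing_def concave_on_def by auto
  have "\<phi> differentiable at r"
    using assms unfolding desingularizing_def by auto
  then have "(\<phi> has_field_derivative deriv \<phi> r) (at r)"
    using DERIV_deriv_iff_real_differentiable by blast
  then have deriv: "((\<lambda>t. - \<phi> t) has_field_derivative - deriv \<phi> r) (at r within {0..<\<eta>})"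
    using DERIV_minus has_field_derivative_at_within by blast
  have "{0<..<\<eta>} \<subseteq> interior {0..<\<eta>}" by (rule interior_maximal) auto
  then have interior: "r \<in> interior {0..<\<eta>}" using assms by auto
  have "connected {0..<\<eta>}" by (rule convex_connected) (rule convex_real_interval)
  moreover have "s \<in> {0..<\<eta>}" using assms by auto
  ultimately have "- \<phi> s - - \<phi> r \<ge> - deriv \<phi> r * (s - r)"
    using convex_on_imp_above_tangent[OF concave _ interior _ deriv] by blast
  then show ?thesis by (simp add: algebra_simps)
qed

lemma two_mult_le_add_if_square_le_mult:
  fixes d u v :: real
  assumes "0 \<le> u" "0 \<le> v" "d\<^sup>2 \<le> u * v"
  shows "2 * d \<le> u + v"
proof -
  have "(2 * d)\<^sup>2 \<le> 4 * (u * v)" using assms(3) by (simp add: power2_eq_square)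
  also have "\<dots> \<le> (u + v)\<^sup>2" using sum_squares_ge_zero[of "u - v" 0]
    by (simp add: power2_eq_square algebra_simps)
  finally show ?thesis using assms(1,2) power2_le_imp_le[of "2 * d" "u + v"] by simp
qed

lemma desingularized_step_bound:
  fixes a b d D r r' :: real
  assumes desing: "desingularizing \<phi> \<eta>"
    and levels: "0 \<le> r'" "r < \<eta>" and descent: "r' + a * d\<^sup>2 \<le> r"
    and pos: "0 < a" "0 < b" "0 \<le> D"
    and KL: "0 < r \<Longrightarrow> b \<le> deriv \<phi> r * D"
  shows "2 * d \<le> D + (1 / (a * b)) * (\<phi> r - \<phi> r')"
proof (cases "r' < r")
  case False
  moreover have "0 \<le> a * d\<^sup>2" using pos(1) by simp
  ultimately have "a * d\<^sup>2 \<le> 0" "r' = r" using descent by auto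
  then have "d = 0" using pos(1) by (simp add: mult_le_0_iff)
  then show ?thesis using \<open>r' = r\<close> pos by simp
next
  case True
  then have "0 < r" using levels by linarith
  have deriv_pos: "0 < deriv \<phi> r"
    using desing \<open>0 < r\<close> levels unfolding desingularizing_def by auto
  have drop: "deriv \<phi> r * (a * d\<^sup>2) \<le> \<phi> r - \<phi> r'"
  proof -
    have "deriv \<phi> r * (a * d\<^sup>2) \<le> deriv \<phi> r * (r - r')"
      using descent deriv_pos by simp
    also have "\<dots> \<le> \<phi> r - \<phi> r'"
      using desingularizing_decrease[OF desing levels(1)] True \<open>0 < r\<close> levels by simp
    finally show ?thesis .
  qed
  have ad_nonneg: "0 \<le> a * d\<^sup>2" using pos by simp
  have "a * b * d\<^sup>2 \<le> (a * d\<^sup>2) * (deriv \<phi> r * D)"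
    using mult_left_mono[OF KL[OF \<open>0 < r\<close>] ad_nonneg] by (simp add: algebra_simps)
  also have "\<dots> = (deriv \<phi> r * (a * d\<^sup>2)) * D" by simp
  also have "\<dots> \<le> (\<phi> r - \<phi> r') * D" using drop pos(3) by (rule mult_right_mono)
  finally have "d\<^sup>2 \<le> D * ((1 / (a * b)) * (\<phi> r - \<phi> r'))"
    using pos by (simp add: field_simps)
  moreover have "0 \<le> \<phi> r - \<phi> r'"
    using drop deriv_pos ad_nonneg by (meson mult_nonneg_nonneg less_imp_le order_trans)
  ultimately show ?thesis
    using two_mult_le_add_if_square_le_mult pos by simp
qed

lemma Gamma_low_set_level:
  assumes "f xs = ereal F" "y \<in> Gamma_low_set f xs \<eta> \<delta>"
  obtains r where "f y = ereal (F + r)" "real_of_ereal (f y - f xs) = r" "0 \<le> r" "r < \<eta>"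
proof -
  have "F \<le> f y" "f y < ereal (F + \<eta>)"
    using assms unfolding Gamma_low_set_def by auto
  then obtain v where "f y = ereal v" by (cases "f y") auto
  then show ?thesis using that[of "v - F"] assms \<open>F \<le> f y\<close> \<open>f y < ereal (F + \<eta>)\<close> by auto
qed

lemma KL_scaled_slope_bound:
  assumes KL: "KL_at f xs \<phi> \<eta> \<delta>" and y: "y \<in> Gamma_set f xs \<eta> \<delta>"
    and slope: "ereal \<beta> * lazy_slope f y \<le> ereal D" and "0 < \<beta>"
  shows "\<beta> \<le> deriv \<phi> (real_of_ereal (f y - f xs)) * D"
proof -
  define c where "c = deriv \<phi> (real_of_ereal (f y - f xs))"
  have kl: "1 \<le> ereal c * lazy_slope f y"
    using KL y unfolding KL_at_def c_def by auto
  have "0 \<le> lazy_slope f y" unfolding lazy_slope_def by (auto intro: Inf_greatest)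
  moreover have "lazy_slope f y \<noteq> \<infinity>" using slope \<open>0 < \<beta>\<close> by auto
  ultimately obtain s where s: "lazy_slope f y = ereal s" "0 \<le> s"
    by (cases "lazy_slope f y") auto
  have "1 \<le> c * s" "\<beta> * s \<le> D" using kl slope s by auto
  have "c \<ge> 0"
  proof (rule ccontr)
    assume "\<not> c \<ge> 0"
    then have "c * s \<le> 0" using s(2) by (simp add: mult_nonpos_nonneg)
    then show False using \<open>1 \<le> c * s\<close> by simp
  qed
  have "\<beta> \<le> \<beta> * (c * s)" using \<open>1 \<le> c * s\<close> \<open>0 < \<beta>\<close> by simp
  also have "\<dots> = c * (\<beta> * s)" by simp
  also have "\<dots> \<le> c * D" using \<open>\<beta> * s \<le> D\<close> \<open>c \<ge> 0\<close> by (rule mult_left_mono)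
  finally show ?thesis unfolding c_def .
qed

theorem mainTheorem7:
  fixes f :: "'a::{real_inner, complete_space} \<Rightarrow> ereal"
    and xs :: 'a and x :: "nat \<Rightarrow> 'a"
    and \<phi> :: "real \<Rightarrow> real" and \<eta> \<delta> :: real
    and a b \<epsilon> :: "nat \<Rightarrow> real" and k :: nat
  assumes "proper_fun f" and "lsc_fun f"
    and "KL_at f xs \<phi> \<eta> \<delta>"
    and H1: "\<And>k. f (x (Suc k)) + ereal (a k * (norm (x (Suc k) - x k))\<^sup>2) \<le> f (x k) \<and> 0 < a k"
    and H2: "\<And>k. ereal (b (Suc k)) * lazy_slope f (x (Suc k))
                 \<le> ereal (norm (x (Suc k) - x k) + \<epsilon> (Suc k))
               \<and> 0 < b (Suc k) \<and> 0 \<le> \<epsilon> (Suc k)"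
    and "1 \<le> k"
    and "x k \<in> Gamma_low_set f xs \<eta> \<delta>" and "x (Suc k) \<in> Gamma_low_set f xs \<eta> \<delta>"
  shows "2 * norm (x (Suc k) - x k)
     \<le> norm (x k - x (k - 1))
        + (1 / (a k * b k)) * (\<phi> (real_of_ereal (f (x k) - f xs))
                              - \<phi> (real_of_ereal (f (x (Suc k)) - f xs)))
        + \<epsilon> k"
proof -
  define d where "d = norm (x (Suc k) - x k)"
  define D where "D = norm (x k - x (k - 1)) + \<epsilon> k"
  have "f xs \<noteq> -\<infinity>" "f xs \<noteq> \<infinity>"
    using \<open>proper_fun f\<close> \<open>x k \<in> Gamma_low_set f xs \<eta> \<delta>\<close>
    unfolding proper_fun_def Gamma_low_set_def by auto
  then obtain F where F: "f xs = ereal F" by (cases "f xs") auto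
  obtain r where r: "f (x k) = ereal (F + r)" "real_of_ereal (f (x k) - f xs) = r" "0 \<le> r" "r < \<eta>"
    using Gamma_low_set_level[OF F \<open>x k \<in> _\<close>] .
  obtain r' where r': "f (x (Suc k)) = ereal (F + r')" "real_of_ereal (f (x (Suc k)) - f xs) = r'" "0 \<le> r'"
    using Gamma_low_set_level[OF F \<open>x (Suc k) \<in> _\<close>] .
  have descent: "r' + a k * d\<^sup>2 \<le> r" "0 < a k" using H1[of k] r r' unfolding d_def by auto
  have "Suc (k - 1) = k" using \<open>1 \<le> k\<close> by simp
  then have slope: "ereal (b k) * lazy_slope f (x k) \<le> ereal D" "0 < b k" "0 \<le> D"
    using H2[of "k - 1"] unfolding D_def by auto
  have "b k \<le> deriv \<phi> r * D" if "0 < r"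
  proof -
    have "x k \<in> Gamma_set f xs \<eta> \<delta>"
      using \<open>x k \<in> Gamma_low_set f xs \<eta> \<delta>\<close> F r that unfolding Gamma_low_set_def Gamma_set_def by auto
    then show ?thesis using KL_scaled_slope_bound[OF \<open>KL_at f xs \<phi> \<eta> \<delta>\<close> _ slope(1,2)] r by simp
  qed
  moreover have "desingularizing \<phi> \<eta>" using \<open>KL_at f xs \<phi> \<eta> \<delta>\<close> unfolding KL_at_def by simp
  ultimately have "2 * d \<le> D + (1 / (a k * b k)) * (\<phi> r - \<phi> r')"
    using desingularized_step_bound[OF _ r'(3) r(4) descent slope(2,3)] by blast
  then show ?thesis using r r' unfolding d_def D_def by simp
qed

end
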